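(* Let $k$ be a field of characteristic $\neq2$, $f\in k[X]$ separable of degree $6$, $A=k[X]/(f)$, $\delta\in A^*$, and let $\Lambda$ be the set of $32$ lines $L_\varepsilon$ on $V_{f,\delta}\otimes\bar k$. Let $\Lambda_1,\Lambda_2$ be the two maximal subsets of $\Lambda$ consisting of lines of the same parity. Then $k(\Lambda_1)=k(\Lambda_2)=k\big(\sqrt{N(\delta)}\big)$, where $N=N_{A/k}$ is the norm from $A$ to $k$.
   Context: $V_{f,\delta}=\{[q]\in\mathbb{P}(A):\delta q^2\in\mathrm{span}(1,X,X^2)\}$. For $\varepsilon\in A\otimes\bar k$ with $\varepsilon^2=\delta$, $L_\varepsilon$ is the line corresponding to the subspace $\{\varepsilon^{-1}(sX+t)\}$. Let $\Omega$ be the roots of $f$ and $\varphi_\theta$ evaluation at $X=\theta$. Two lines $L_\varepsilon,L_{\varepsilon'}$ have the same parity if the number of $\theta\in\Omega$ with $\varphi_\theta(\varepsilon'/\varepsilon)=-1$ is even; this is independent of the signs of $\varepsilon,\varepsilon'$ since $\#\Omega=6$. For a set $Y$ acted on by $G(\bar k/k)$, $k(Y)$ is the smallest subfield $k'\supseteq k$ of $\bar k$ such that every $\sigma\in G(\bar k/k')$ maps $Y$ to itself. *)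

theory Defs
  imports "HOL-Computational_Algebra.Polynomial"
begin

text \<open>Throughout, the ambient type 'a plays the role of the algebraic closure of k;
 k is a subfield (a subset of 'a).  Elements of A = k[X]/(f) and of A \<otimes> kbar = kbar[X]/(f)
 are represented by polynomials, taken modulo f.\<close>

definition sub_field :: "'a::field set \<Rightarrow> bool" where
  "sub_field F \<longleftrightarrow> 0 \<in> F \<and> 1 \<in> F \<and> (\<forall>x\<in>F. \<forall>y\<in>F. x + y \<in> F \<and> x * y \<in> F)
     \<and> (\<forall>x\<in>F. - x \<in> F) \<and> (\<forall>x\<in>F. x \<noteq> 0 \<longrightarrow> inverse x \<in> F)"

definition alg_closed :: "'a::field itself \<Rightarrow> bool" where
  "alg_closed _ \<longleftrightarrow> (\<forall>p::'a poly. degree p \<ge> 1 \<longrightarrow> (\<exists>x. poly p x = 0))"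

definition algebraic_over :: "'a::field set \<Rightarrow> 'a \<Rightarrow> bool" where
  "algebraic_over k x \<longleftrightarrow> (\<exists>p. p \<noteq> 0 \<and> (\<forall>i. coeff p i \<in> k) \<and> poly p x = 0)"

definition is_alg_closure_of :: "'a::field set \<Rightarrow> bool" where
  "is_alg_closure_of k \<longleftrightarrow> sub_field k \<and> alg_closed TYPE('a) \<and> (\<forall>x. algebraic_over k x)"

definition field_aut :: "('a::field \<Rightarrow> 'a) \<Rightarrow> bool" where
  "field_aut \<sigma> \<longleftrightarrow> bij \<sigma> \<and> \<sigma> 1 = 1 \<and> (\<forall>x y. \<sigma> (x + y) = \<sigma> x + \<sigma> y \<and> \<sigma> (x * y) = \<sigma> x * \<sigma> y)"

definition Gal :: "'a::field set \<Rightarrow> ('a \<Rightarrow> 'a) set" where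
  "Gal k' = {\<sigma>. field_aut \<sigma> \<and> (\<forall>x\<in>k'. \<sigma> x = x)}"

definition adjoin :: "'a::field set \<Rightarrow> 'a \<Rightarrow> 'a set" where
  "adjoin k r = \<Inter> {F. sub_field F \<and> k \<subseteq> F \<and> r \<in> F}"

definition act_line :: "('a::field \<Rightarrow> 'a) \<Rightarrow> 'a poly set \<Rightarrow> 'a poly set" where
  "act_line \<sigma> L = map_poly \<sigma> ` L"

definition act_lines :: "('a::field \<Rightarrow> 'a) \<Rightarrow> 'a poly set set \<Rightarrow> 'a poly set set" where
  "act_lines \<sigma> Y = act_line \<sigma> ` Y"

definition is_field_of_def :: "'a::field set \<Rightarrow> 'a poly set set \<Rightarrow> 'a set \<Rightarrow> bool" where
  "is_field_of_def k Y F \<longleftrightarrow>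
     sub_field F \<and> k \<subseteq> F \<and> (\<forall>\<sigma>\<in>Gal F. act_lines \<sigma> Y = Y) \<and>
     (\<forall>k'. sub_field k' \<and> k \<subseteq> k' \<and> (\<forall>\<sigma>\<in>Gal k'. act_lines \<sigma> Y = Y) \<longrightarrow> F \<subseteq> k')"

text \<open>L_\<epsilon> = {\<epsilon>^-1 (sX + t) : s,t in kbar}, as a subspace of kbar[X]/(f) (reduced representatives).\<close>
definition line_of :: "'a::field poly \<Rightarrow> 'a poly \<Rightarrow> 'a poly set" where
  "line_of f \<epsilon> = {p. \<exists>u s t. (u * \<epsilon>) mod f = 1 \<and> p = (u * [:t, s:]) mod f}"

definition is_sqrt_mod :: "'a::field poly \<Rightarrow> 'a poly \<Rightarrow> 'a poly \<Rightarrow> bool" where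
  "is_sqrt_mod f \<delta> \<epsilon> \<longleftrightarrow> (\<epsilon> * \<epsilon>) mod f = \<delta> mod f"

definition lines :: "'a::field poly \<Rightarrow> 'a poly \<Rightarrow> 'a poly set set" where
  "lines f \<delta> = {line_of f \<epsilon> | \<epsilon>. is_sqrt_mod f \<delta> \<epsilon>}"

definition same_parity :: "'a::field poly \<Rightarrow> 'a poly \<Rightarrow> 'a poly set \<Rightarrow> 'a poly set \<Rightarrow> bool" where
  "same_parity f \<delta> L L' \<longleftrightarrow> (\<exists>\<epsilon> \<epsilon>'. is_sqrt_mod f \<delta> \<epsilon> \<and> is_sqrt_mod f \<delta> \<epsilon>' \<and>
      L = line_of f \<epsilon> \<and> L' = line_of f \<epsilon>' \<and>
      even (card {\<theta>. poly f \<theta> = 0 \<and> poly \<epsilon>' \<theta> / poly \<epsilon> \<theta> = -1}))"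

definition max_same_parity :: "'a::field poly \<Rightarrow> 'a poly \<Rightarrow> 'a poly set set \<Rightarrow> bool" where
  "max_same_parity f \<delta> M \<longleftrightarrow>
     (let P = (\<lambda>S. S \<subseteq> lines f \<delta> \<and> (\<forall>L\<in>S. \<forall>L'\<in>S. same_parity f \<delta> L L'))
      in P M \<and> (\<forall>S. P S \<and> M \<subseteq> S \<longrightarrow> S = M))"

definition norm_A :: "'a::field poly \<Rightarrow> 'a poly \<Rightarrow> 'a" where
  "norm_A f \<delta> = (\<Prod>\<theta>\<in>{\<theta>. poly f \<theta> = 0}. poly \<delta> \<theta>)"

end

theory Submission
  imports Defs
begin

text \<open>
  Over the algebraic closure, a square root \<open>\<epsilon>\<close> of \<open>\<delta>\<close> is a choice of sign at each of the six
  roots \<open>\<theta>\<close> of \<open>f\<close>. The line \<open>L\<^sub>\<epsilon>\<close> recovers \<open>\<epsilon>\<close> up to a global sign, so, the degree being even,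
  the norm \<open>N(\<epsilon>) = \<Prod>\<^sub>\<theta> \<epsilon>(\<theta>)\<close> is an invariant of the line, and two lines have the same parity
  exactly when their norms agree. As \<open>N(\<epsilon>)\<^sup>2 = N(\<delta>) = r\<^sup>2\<close>, the two parity classes are
  \<open>{L\<^sub>\<epsilon> | N(\<epsilon>) = \<plusminus>r}\<close>. An automorphism \<open>\<sigma>\<close> over \<open>k\<close> maps \<open>L\<^sub>\<epsilon>\<close> to \<open>L\<^bsub>\<sigma>(\<epsilon>)\<^esub>\<close> and
  \<open>N(\<sigma>(\<epsilon>)) = \<sigma>(N(\<epsilon>))\<close>, so it preserves a parity class iff \<open>\<sigma>(r) = r\<close>. Hence the automorphisms
  fixing \<open>k(r)\<close> stabilise the class, while for a field \<open>k' \<supseteq> k\<close> not containing \<open>r\<close> (note that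
  \<open>r\<^sup>2 = N(\<delta>) \<in> k\<close>, by a resultant argument) the automorphism \<open>r \<mapsto> -r\<close> of \<open>k'(r)\<close> extends, by
  Zorn's lemma, to an automorphism of the algebraic closure that swaps the two classes.
\<close>

section \<open>Subfields and polynomials over them\<close>

lemma sub_field_zero: "sub_field F \<Longrightarrow> 0 \<in> F"
  and sub_field_one: "sub_field F \<Longrightarrow> 1 \<in> F"
  and sub_field_add: "sub_field F \<Longrightarrow> x \<in> F \<Longrightarrow> y \<in> F \<Longrightarrow> x + y \<in> F"
  and sub_field_mult: "sub_field F \<Longrightarrow> x \<in> F \<Longrightarrow> y \<in> F \<Longrightarrow> x * y \<in> F"
  and sub_field_uminus: "sub_field F \<Longrightarrow> x \<in> F \<Longrightarrow> - x \<in> F"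
  by (simp_all add: sub_field_def)

lemma sub_field_inverse: "sub_field F \<Longrightarrow> x \<in> F \<Longrightarrow> inverse x \<in> F"
  by (cases "x = 0") (auto simp add: sub_field_def)

lemma sub_field_diff: "sub_field F \<Longrightarrow> x \<in> F \<Longrightarrow> y \<in> F \<Longrightarrow> x - y \<in> F"
  by (metis diff_conv_add_uminus sub_field_add sub_field_uminus)

lemma sub_field_divide: "sub_field F \<Longrightarrow> x \<in> F \<Longrightarrow> y \<in> F \<Longrightarrow> x / y \<in> F"
  by (metis divide_inverse sub_field_inverse sub_field_mult)

lemma sub_field_power: "sub_field F \<Longrightarrow> x \<in> F \<Longrightarrow> x ^ n \<in> F"
  by (induction n) (auto intro: sub_field_one sub_field_mult)

lemma sub_field_prod: "sub_field F \<Longrightarrow> (\<And>x. x \<in> S \<Longrightarrow> g x \<in> F) \<Longrightarrow> prod g S \<in> F"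
  by (induction S rule: infinite_finite_induct) (auto intro: sub_field_one sub_field_mult)

lemma sub_field_UNIV: "sub_field UNIV"
  by (simp add: sub_field_def)

lemma sub_field_Inter: "(\<And>F. F \<in> FF \<Longrightarrow> sub_field F) \<Longrightarrow> sub_field (\<Inter>FF)"
  unfolding sub_field_def by blast

lemma sub_field_adjoin: "sub_field (adjoin k r)"
  and subset_adjoin: "k \<subseteq> adjoin k r"
  and mem_adjoin: "r \<in> adjoin k r"
  and adjoin_least: "sub_field F \<Longrightarrow> k \<subseteq> F \<Longrightarrow> r \<in> F \<Longrightarrow> adjoin k r \<subseteq> F"
  unfolding adjoin_def by (auto intro: sub_field_Inter)

definition polys_over :: "'a::field set \<Rightarrow> 'a poly set" where
  "polys_over F = {p. \<forall>i. coeff p i \<in> F}"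

lemma mem_polys_over: "p \<in> polys_over F \<longleftrightarrow> (\<forall>i. coeff p i \<in> F)"
  by (simp add: polys_over_def)

lemma pCons_polys_over_iff: "sub_field F \<Longrightarrow> pCons a p \<in> polys_over F \<longleftrightarrow> a \<in> F \<and> p \<in> polys_over F"
  by (auto simp: mem_polys_over coeff_pCons split: nat.splits)

context
  fixes F :: "'a::field set"
  assumes F: "sub_field F"
begin

lemma zero_polys_over: "0 \<in> polys_over F"
  and const_polys_over: "a \<in> F \<Longrightarrow> [:a:] \<in> polys_over F"
  and monom_polys_over: "a \<in> F \<Longrightarrow> monom a n \<in> polys_over F"
  and add_polys_over: "p \<in> polys_over F \<Longrightarrow> q \<in> polys_over F \<Longrightarrow> p + q \<in> polys_over F"
  and uminus_polys_over: "p \<in> polys_over F \<Longrightarrow> - p \<in> polys_over F"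
  and diff_polys_over: "p \<in> polys_over F \<Longrightarrow> q \<in> polys_over F \<Longrightarrow> p - q \<in> polys_over F"
  and smult_polys_over: "a \<in> F \<Longrightarrow> p \<in> polys_over F \<Longrightarrow> smult a p \<in> polys_over F"
  using F by (auto simp: mem_polys_over coeff_pCons sub_field_zero sub_field_add
      sub_field_uminus sub_field_diff sub_field_mult split: nat.splits)

lemma mult_polys_over: "p \<in> polys_over F \<Longrightarrow> q \<in> polys_over F \<Longrightarrow> p * q \<in> polys_over F"
  by (induction p) (auto simp: pCons_polys_over_iff[OF F] F sub_field_zero
      intro: add_polys_over smult_polys_over)

lemma pcompose_polys_over: "p \<in> polys_over F \<Longrightarrow> q \<in> polys_over F \<Longrightarrow> pcompose p q \<in> polys_over F"
  by (induction p) (auto simp: pcompose_pCons pCons_polys_over_iff[OF F]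
      intro: zero_polys_over add_polys_over const_polys_over mult_polys_over)

lemma poly_in_sub_field: "p \<in> polys_over F \<Longrightarrow> x \<in> F \<Longrightarrow> poly p x \<in> F"
  by (induction p) (auto simp: pCons_polys_over_iff[OF F] F sub_field_zero sub_field_add sub_field_mult)

lemma polys_over_division:
  assumes p: "p \<in> polys_over F" "p \<noteq> 0" and g: "g \<in> polys_over F"
  shows "\<exists>q r. q \<in> polys_over F \<and> r \<in> polys_over F \<and> g = q * p + r \<and> (r = 0 \<or> degree r < degree p)"
  using g
proof (induction "degree g" arbitrary: g rule: less_induct)
  case less
  show ?case
  proof (cases "degree g < degree p")
    case True
    then show ?thesis using less.prems zero_polys_over by (intro exI[of _ 0] exI[of _ g]) auto
  next
    case False
    define h where "h = monom (lead_coeff g / lead_coeff p) (degree g - degree p)"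
    have h: "h \<in> polys_over F"
      unfolding h_def using less.prems p F by (intro monom_polys_over sub_field_divide) (auto simp: mem_polys_over)
    have g': "g - h * p \<in> polys_over F"
      using less.prems h p by (intro diff_polys_over mult_polys_over)
    show ?thesis
    proof (cases "g - h * p = 0")
      case True
      then show ?thesis using h zero_polys_over by (intro exI[of _ h] exI[of _ 0]) simp
    next
      case g'_nonzero: False
      have "degree (h * p) \<le> degree h + degree p" by (rule degree_mult_le)
      moreover have "degree h \<le> degree g - degree p" unfolding h_def by (rule degree_monom_le)
      ultimately have "degree (h * p) \<le> degree g" using \<open>\<not> degree g < degree p\<close> by linarith
      moreover have "coeff (g - h * p) (degree g) = 0"
        using \<open>\<not> degree g < degree p\<close> p(2) by (simp add: h_def coeff_monom_mult)
      ultimately have "degree (g - h * p) < degree g"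
        by (intro degree_less_if_less_eqI g'_nonzero degree_diff_le) simp_all
      then obtain q r where qr: "q \<in> polys_over F" "r \<in> polys_over F" "g - h * p = q * p + r"
          "r = 0 \<or> degree r < degree p"
        using less.hyps g' by blast
      then have "g = (q + h) * p + r" by (simp add: algebra_simps)
      then show ?thesis using qr h by (intro exI[of _ "q + h"] exI[of _ r]) (simp add: add_polys_over)
    qed
  qed
qed

end

definition field_hom_on :: "'a::field set \<Rightarrow> ('a \<Rightarrow> 'a) \<Rightarrow> bool" where
  "field_hom_on F \<phi> \<longleftrightarrow> \<phi> 0 = 0 \<and> \<phi> 1 = 1 \<and>
     (\<forall>x\<in>F. \<forall>y\<in>F. \<phi> (x + y) = \<phi> x + \<phi> y \<and> \<phi> (x * y) = \<phi> x * \<phi> y)"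

context
  fixes F :: "'a::field set" and \<phi> :: "'a \<Rightarrow> 'a"
  assumes F: "sub_field F" and \<phi>: "field_hom_on F \<phi>"
begin

lemma field_hom_on_zero: "\<phi> 0 = 0"
  and field_hom_on_one: "\<phi> 1 = 1"
  and field_hom_on_add: "x \<in> F \<Longrightarrow> y \<in> F \<Longrightarrow> \<phi> (x + y) = \<phi> x + \<phi> y"
  and field_hom_on_mult: "x \<in> F \<Longrightarrow> y \<in> F \<Longrightarrow> \<phi> (x * y) = \<phi> x * \<phi> y"
  using \<phi> by (simp_all add: field_hom_on_def)

lemma field_hom_on_uminus: "x \<in> F \<Longrightarrow> \<phi> (- x) = - \<phi> x"
  using field_hom_on_add[of x "- x"]
  by (simp add: F sub_field_uminus field_hom_on_zero eq_neg_iff_add_eq_0 add.commute)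

lemma field_hom_on_diff: "x \<in> F \<Longrightarrow> y \<in> F \<Longrightarrow> \<phi> (x - y) = \<phi> x - \<phi> y"
  using field_hom_on_add[of x "- y"] by (simp add: F sub_field_uminus field_hom_on_uminus)

lemma field_hom_on_nonzero: "x \<in> F \<Longrightarrow> x \<noteq> 0 \<Longrightarrow> \<phi> x \<noteq> 0"
  using field_hom_on_mult[of x "inverse x"] by (auto simp: F sub_field_inverse field_hom_on_one)

lemma inj_on_field_hom_on: "inj_on \<phi> F"
  by (rule inj_onI) (metis F field_hom_on_diff field_hom_on_nonzero right_minus_eq sub_field_diff)

lemma field_hom_on_prod: "(\<And>x. x \<in> S \<Longrightarrow> g x \<in> F) \<Longrightarrow> \<phi> (prod g S) = (\<Prod>x\<in>S. \<phi> (g x))"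
  by (induction S rule: infinite_finite_induct)
    (auto simp: field_hom_on_one field_hom_on_mult F sub_field_prod)

lemma coeff_map_poly_hom: "coeff (map_poly \<phi> p) i = \<phi> (coeff p i)"
  by (simp add: coeff_map_poly field_hom_on_zero)

lemma map_poly_const_hom: "map_poly \<phi> [:a:] = [:\<phi> a:]"
  by (simp add: map_poly_pCons field_hom_on_zero)

lemma map_poly_add_hom: "p \<in> polys_over F \<Longrightarrow> q \<in> polys_over F \<Longrightarrow>
    map_poly \<phi> (p + q) = map_poly \<phi> p + map_poly \<phi> q"
  and map_poly_diff_hom: "p \<in> polys_over F \<Longrightarrow> q \<in> polys_over F \<Longrightarrow>
    map_poly \<phi> (p - q) = map_poly \<phi> p - map_poly \<phi> q"
  by (auto intro!: poly_eqI simp: coeff_map_poly_hom mem_polys_over field_hom_on_add field_hom_on_diff)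

lemma map_poly_smult_hom: "a \<in> F \<Longrightarrow> p \<in> polys_over F \<Longrightarrow>
    map_poly \<phi> (smult a p) = smult (\<phi> a) (map_poly \<phi> p)"
  by (auto intro!: poly_eqI simp: coeff_map_poly_hom mem_polys_over field_hom_on_mult)

lemma map_poly_mult_hom: "p \<in> polys_over F \<Longrightarrow> q \<in> polys_over F \<Longrightarrow>
    map_poly \<phi> (p * q) = map_poly \<phi> p * map_poly \<phi> q"
proof (induction p)
  case (pCons a p)
  then have a: "a \<in> F" and p: "p \<in> polys_over F" by (simp_all add: pCons_polys_over_iff F)
  have "map_poly \<phi> (pCons a p * q) = map_poly \<phi> (smult a q + pCons 0 (p * q))" by simp
  also have "\<dots> = smult (\<phi> a) (map_poly \<phi> q) + pCons 0 (map_poly \<phi> p * map_poly \<phi> q)"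
    using pCons a p F by (simp add: map_poly_add_hom map_poly_smult_hom smult_polys_over
        mult_polys_over pCons_polys_over_iff sub_field_zero map_poly_pCons field_hom_on_zero)
  also have "\<dots> = map_poly \<phi> (pCons a p) * map_poly \<phi> q"
    by (simp add: map_poly_pCons field_hom_on_zero)
  finally show ?case .
qed simp

lemma poly_map_poly_hom: "p \<in> polys_over F \<Longrightarrow> x \<in> F \<Longrightarrow> poly (map_poly \<phi> p) (\<phi> x) = \<phi> (poly p x)"
  by (induction p) (auto simp: map_poly_pCons field_hom_on_zero pCons_polys_over_iff F
      field_hom_on_add field_hom_on_mult poly_in_sub_field sub_field_mult)

end

section \<open>Roots over an algebraically closed field\<close>

definition is_root_list :: "'a::field poly \<Rightarrow> 'a list \<Rightarrow> bool" where
  "is_root_list p xs \<longleftrightarrow> p = smult (lead_coeff p) (\<Prod>a\<leftarrow>xs. [:-a, 1:])"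

lemma poly_linear_prod_list: "poly (\<Prod>a\<leftarrow>xs. [:-a, 1:]) x = (\<Prod>a\<leftarrow>xs. x - a)"
  for x :: "'a::field"
  by (induction xs) (simp_all add: algebra_simps)

lemma poly_root_list: "is_root_list p xs \<Longrightarrow> poly p x = lead_coeff p * (\<Prod>a\<leftarrow>xs. x - a)"
  unfolding is_root_list_def by (metis poly_linear_prod_list poly_smult)

lemma poly_root_list_eq_0: "is_root_list p xs \<Longrightarrow> a \<in> set xs \<Longrightarrow> poly p a = 0"
  by (force simp: poly_root_list prod_list_zero_iff)

lemma exists_root_list:
  fixes p :: "'a::field poly"
  assumes ac: "alg_closed TYPE('a)" and "p \<noteq> 0"
  shows "\<exists>xs. length xs = degree p \<and> is_root_list p xs"
  using assms(2)
proof (induction "degree p" arbitrary: p rule: less_induct)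
  case less
  show ?case
  proof (cases "degree p = 0")
    case True
    then show ?thesis
      by (intro exI[of _ "[]"]) (auto simp: is_root_list_def elim: degree_eq_zeroE)
  next
    case False
    then obtain a where "poly p a = 0" using ac by (auto simp: alg_closed_def Suc_le_eq)
    then obtain q where q: "p = [:-a, 1:] * q" using dvd_iff_poly_eq_0[of "-a" p] by auto
    with less.prems have "q \<noteq> 0" by auto
    then have dq: "degree p = Suc (degree q)" unfolding q by (subst degree_mult_eq) auto
    obtain ys where ys: "length ys = degree q" "is_root_list q ys"
      using less.hyps[of q] dq \<open>q \<noteq> 0\<close> by auto
    have lp: "lead_coeff p = lead_coeff q" unfolding q lead_coeff_mult by simp
    have eq: "p = [:-a, 1:] * smult (lead_coeff q) (\<Prod>b\<leftarrow>ys. [:-b, 1:])"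
      using q ys(2) unfolding is_root_list_def by metis
    have "is_root_list p (a # ys)"
      unfolding is_root_list_def lp by (simp only: list.map prod_list.Cons mult_smult_right eq)
    with ys(1) dq show ?thesis by (intro exI[of _ "a # ys"]) simp
  qed
qed

lemma rsquarefree_root_list:
  fixes f :: "'a::field poly"
  assumes ac: "alg_closed TYPE('a)" and sf: "rsquarefree f"
  shows "\<exists>xs. distinct xs \<and> set xs = {x. poly f x = 0} \<and> length xs = degree f \<and> is_root_list f xs"
proof -
  have f: "f \<noteq> 0" using sf by (simp add: rsquarefree_def)
  then obtain xs where xs: "length xs = degree f" "is_root_list f xs"
    using exists_root_list[OF ac] by blast
  have "set xs = {x. poly f x = 0}"
    using f by (auto simp: poly_root_list[OF xs(2)] prod_list_zero_iff)
  moreover have "distinct xs"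
  proof (rule ccontr)
    assume "\<not> distinct xs"
    then obtain as y bs cs where d: "xs = as @ [y] @ bs @ [y] @ cs"
      using not_distinct_decomp by blast
    have "prod_list (map g (as @ [y] @ bs @ [y] @ cs)) =
        g y ^ 2 * (prod_list (map g as) * prod_list (map g bs) * prod_list (map g cs))"
      for g :: "'a \<Rightarrow> 'a poly" by (simp add: power2_eq_square ac_simps)
    then have "[:-y, 1:] ^ 2 dvd (\<Prod>a\<leftarrow>xs. [:-a, 1:])"
      unfolding d by (metis dvd_triv_left)
    then have "[:-y, 1:] ^ 2 dvd f" using xs(2) unfolding is_root_list_def by (metis dvd_smult)
    then have "2 \<le> order y f" using f order_divides by blast
    then show False using sf by (auto simp: rsquarefree_def dest: spec[of _ y])
  qed
  ultimately show ?thesis using xs by blast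
qed

lemma card_roots_rsquarefree:
  fixes f :: "'a::field poly"
  assumes "alg_closed TYPE('a)" and "rsquarefree f"
  shows "card {x. poly f x = 0} = degree f"
  using rsquarefree_root_list[OF assms] distinct_card by metis

lemma poly_eq_0_if_card_roots_gt:
  fixes q :: "'a::idom poly"
  assumes "finite S" "\<forall>x\<in>S. poly q x = 0" "degree q < card S"
  shows "q = 0"
proof (rule ccontr)
  assume "q \<noteq> 0"
  then have "card S \<le> card {x. poly q x = 0}"
    using assms(2) poly_roots_finite by (intro card_mono) auto
  also have "\<dots> \<le> degree q" using card_poly_roots_bound[OF \<open>q \<noteq> 0\<close>] .
  finally show False using assms(3) by simp
qed

lemma prod_linear_dvd_if_roots:
  fixes q :: "'a::field poly"
  assumes "finite S" "\<forall>x\<in>S. poly q x = 0"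
  shows "(\<Prod>x\<in>S. [:-x, 1:]) dvd q"
  using assms
proof (induction S arbitrary: q rule: finite_induct)
  case (insert a S)
  then obtain q1 where q1: "q = [:-a, 1:] * q1" using dvd_iff_poly_eq_0[of "-a" q] by auto
  have "\<forall>x\<in>S. poly q1 x = 0" using insert q1 by auto
  then have "(\<Prod>x\<in>S. [:-x, 1:]) dvd q1" using insert by blast
  then have "[:-a, 1:] * (\<Prod>x\<in>S. [:-x, 1:]) dvd q" unfolding q1 by (rule mult_dvd_mono[OF dvd_refl])
  then show ?case using insert by simp
qed simp

lemma exists_interpolating_poly:
  fixes v :: "'a::field \<Rightarrow> 'a"
  assumes "finite S"
  shows "\<exists>p. \<forall>x\<in>S. poly p x = v x"
  using assms
proof (induction S rule: finite_induct)
  case (insert a S)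
  then obtain p where p: "\<forall>x\<in>S. poly p x = v x" by blast
  define w where "w = (\<Prod>b\<in>S. [:-b, 1:])"
  have "poly w x = 0" if "x \<in> S" for x
    unfolding w_def poly_prod using insert that by (auto intro: prod_zero)
  moreover have "poly w a \<noteq> 0"
    unfolding w_def poly_prod using insert by auto
  ultimately have "\<forall>x\<in>insert a S. poly (p + smult ((v a - poly p a) / poly w a) w) x = v x"
    using p by auto
  then show ?case by blast
qed simp

lemma prod_list_mult_distrib:
  "(\<Prod>x\<leftarrow>xs. g x * h x) = (\<Prod>x\<leftarrow>xs. g x) * (\<Prod>x\<leftarrow>xs. (h x :: 'a::comm_monoid_mult))"
  by (induction xs) (auto simp: ac_simps)

lemma prod_list_const: "(\<Prod>x\<leftarrow>xs. c) = c ^ length xs"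
  by (induction xs) auto

lemma prod_list_swap:
  "(\<Prod>a\<leftarrow>xs. \<Prod>b\<leftarrow>ys. h a b) = (\<Prod>b\<leftarrow>ys. \<Prod>a\<leftarrow>xs. (h a b :: 'a::comm_monoid_mult))"
  by (induction xs) (auto simp: prod_list_mult_distrib prod_list_const)

section \<open>The norm of a polynomial over \<open>k\<close> lies in \<open>k\<close>\<close>

lemma prod_poly_root_list_swap:
  assumes p: "is_root_list p xs" and g: "is_root_list g ys"
  shows "lead_coeff p ^ length ys * (\<Prod>a\<leftarrow>xs. poly g a) =
    (-1) ^ (length xs * length ys) * (lead_coeff g ^ length xs * (\<Prod>b\<leftarrow>ys. poly p b))"
proof -
  have "(\<Prod>b\<leftarrow>ys. \<Prod>a\<leftarrow>xs. b - a) = (\<Prod>b\<leftarrow>ys. (-1) ^ length xs * (\<Prod>a\<leftarrow>xs. a - b))"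
    by (simp flip: prod_list_const prod_list_mult_distrib)
  also have "\<dots> = (-1) ^ (length xs * length ys) * (\<Prod>a\<leftarrow>xs. \<Prod>b\<leftarrow>ys. a - b)"
    by (simp add: prod_list_mult_distrib prod_list_const power_mult prod_list_swap[of "\<lambda>a b. a - b"])
  finally have swap: "(\<Prod>b\<leftarrow>ys. \<Prod>a\<leftarrow>xs. b - a) =
      (-1) ^ (length xs * length ys) * (\<Prod>a\<leftarrow>xs. \<Prod>b\<leftarrow>ys. a - b)" .
  have sq: "(-1::'a) ^ (length xs * length ys) * (-1) ^ (length xs * length ys) = 1"
    by (simp flip: power_mult_distrib)
  show ?thesis
    using sq by (simp add: poly_root_list[OF p] poly_root_list[OF g] prod_list_mult_distrib
        prod_list_const swap algebra_simps)
qed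

text \<open>Up to a unit of \<open>k\<close>, the product is the resultant of \<open>p\<close> and \<open>g\<close>. The induction runs
  Euclid's algorithm on the pair, using \<open>Res(p, g) = Res(p, g mod p)\<close> and the symmetry above.\<close>

lemma prod_poly_root_list_in_sub_field:
  fixes k :: "'a::field set"
  assumes ac: "alg_closed TYPE('a)" and k: "sub_field k"
    and "p \<in> polys_over k" "p \<noteq> 0" "is_root_list p xs" "g \<in> polys_over k"
  shows "(\<Prod>a\<leftarrow>xs. poly g a) \<in> k"
  using assms(3-)
proof (induction "degree p" arbitrary: p xs g rule: less_induct)
  case less
  obtain q r where qr: "q \<in> polys_over k" "r \<in> polys_over k" "g = q * p + r"
      "r = 0 \<or> degree r < degree p"
    using polys_over_division[OF k less.prems(1,2,4)] by blast
  have "(\<Prod>a\<leftarrow>xs. poly g a) = (\<Prod>a\<leftarrow>xs. poly r a)"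
    using poly_root_list_eq_0[OF less.prems(3)] qr(3) by (intro arg_cong[where f=prod_list] map_cong) auto
  also have "\<dots> \<in> k"
  proof (cases "r = 0")
    case True
    then show ?thesis by (simp add: prod_list_const k sub_field_power sub_field_zero)
  next
    case False
    then obtain ys where ys: "is_root_list r ys" using exists_root_list[OF ac] by blast
    have IH: "(\<Prod>b\<leftarrow>ys. poly p b) \<in> k"
      using less.hyps[OF _ qr(2) False ys less.prems(1)] qr(4) False by blast
    have lc: "lead_coeff p \<in> k" "lead_coeff p \<noteq> 0" "lead_coeff r \<in> k"
      using less.prems(1,2) qr(2) by (simp_all add: mem_polys_over)
    have "(\<Prod>a\<leftarrow>xs. poly r a) = (-1) ^ (length xs * length ys) * lead_coeff r ^ length xs
        * (\<Prod>b\<leftarrow>ys. poly p b) / lead_coeff p ^ length ys"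
      using prod_poly_root_list_swap[OF less.prems(3) ys] lc(2) by (simp add: field_simps)
    then show ?thesis
      using IH lc k by (simp add: sub_field_divide sub_field_mult sub_field_power sub_field_uminus sub_field_one)
  qed
  finally show ?case .
qed

lemma norm_A_in_sub_field:
  fixes k :: "'a::field set" and f \<delta> :: "'a poly"
  assumes ac: "alg_closed TYPE('a)" and k: "sub_field k" and "rsquarefree f"
    and "f \<in> polys_over k" "\<delta> \<in> polys_over k"
  shows "norm_A f \<delta> \<in> k"
proof -
  obtain xs where xs: "distinct xs" "set xs = {x. poly f x = 0}" "is_root_list f xs"
    using rsquarefree_root_list[OF ac \<open>rsquarefree f\<close>] by blast
  have "f \<noteq> 0" using \<open>rsquarefree f\<close> by (simp add: rsquarefree_def)
  have "norm_A f \<delta> = (\<Prod>a\<leftarrow>xs. poly \<delta> a)"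
    unfolding norm_A_def using xs(1,2) by (metis prod.distinct_set_conv_list)
  also have "\<dots> \<in> k" using prod_poly_root_list_in_sub_field[OF ac k] assms(4,5) xs(3) \<open>f \<noteq> 0\<close> by blast
  finally show ?thesis .
qed

section \<open>Field automorphisms\<close>

lemma field_hom_on_UNIV_if_field_aut: "field_aut \<tau> \<Longrightarrow> field_hom_on UNIV \<tau>"
  unfolding field_aut_def field_hom_on_def by (metis add_cancel_right_right)

lemma field_aut_add: "field_aut \<tau> \<Longrightarrow> \<tau> (x + y) = \<tau> x + \<tau> y"
  and field_aut_mult: "field_aut \<tau> \<Longrightarrow> \<tau> (x * y) = \<tau> x * \<tau> y"
  and inj_field_aut: "field_aut \<tau> \<Longrightarrow> inj \<tau>"
  by (simp_all add: field_aut_def bij_is_inj)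

lemma field_aut_uminus: "field_aut \<tau> \<Longrightarrow> \<tau> (- x) = - \<tau> x"
  using field_hom_on_uminus[OF sub_field_UNIV field_hom_on_UNIV_if_field_aut] by blast

lemma field_aut_inv:
  assumes \<tau>: "field_aut \<tau>"
  shows "field_aut (inv \<tau>)"
proof -
  have bij: "bij \<tau>" and hom: "\<tau> (x + y) = \<tau> x + \<tau> y" "\<tau> (x * y) = \<tau> x * \<tau> y" "\<tau> 1 = 1" for x y
    using \<tau> by (simp_all add: field_aut_def)
  have "inv \<tau> (x + y) = inv \<tau> x + inv \<tau> y" "inv \<tau> (x * y) = inv \<tau> x * inv \<tau> y" for x y
    using hom bij by (metis bij_inv_eq_iff)+
  moreover have "inv \<tau> 1 = 1" using hom(3) bij by (metis bij_inv_eq_iff)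
  ultimately show ?thesis using bij_imp_bij_inv[OF bij] by (simp add: field_aut_def)
qed

lemma map_poly_field_aut_inv:
  assumes \<tau>: "field_aut \<tau>"
  shows "map_poly \<tau> (map_poly (inv \<tau>) p) = p" "map_poly (inv \<tau>) (map_poly \<tau> p) = p"
proof -
  have bij: "bij \<tau>" using \<tau> by (simp add: field_aut_def)
  have "\<tau> 0 = 0" "inv \<tau> 0 = 0"
    using field_hom_on_zero[OF sub_field_UNIV field_hom_on_UNIV_if_field_aut] \<tau> field_aut_inv[OF \<tau>] by blast+
  then show "map_poly \<tau> (map_poly (inv \<tau>) p) = p" "map_poly (inv \<tau>) (map_poly \<tau> p) = p"
    using bij by (simp_all add: map_poly_map_poly map_poly_idI bij_is_surj surj_f_inv_f bij_is_inj)
qed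

lemma field_aut_if_field_hom_on_UNIV:
  assumes alg: "\<forall>x. algebraic_over k x" and \<sigma>: "field_hom_on UNIV \<sigma>" and fix_k: "\<forall>x\<in>k. \<sigma> x = x"
  shows "field_aut \<sigma>"
proof -
  have inj: "inj \<sigma>" using inj_on_field_hom_on[OF sub_field_UNIV \<sigma>] .
  have "y \<in> range \<sigma>" for y
  proof -
    obtain q where q: "q \<noteq> 0" "\<forall>i. coeff q i \<in> k" "poly q y = 0"
      using alg unfolding algebraic_over_def by blast
    define S where "S = {x. poly q x = 0}"
    have "map_poly \<sigma> q = q"
      using q(2) fix_k by (intro poly_eqI) (simp add: coeff_map_poly_hom[OF sub_field_UNIV \<sigma>])
    then have poly_\<sigma>: "poly q (\<sigma> x) = \<sigma> (poly q x)" for x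
      using poly_map_poly_hom[OF sub_field_UNIV \<sigma>, of q x] by (simp add: mem_polys_over)
    have "finite S" unfolding S_def using poly_roots_finite[OF q(1)] .
    moreover have "\<sigma> ` S \<subseteq> S"
      unfolding S_def using poly_\<sigma> field_hom_on_zero[OF sub_field_UNIV \<sigma>] by auto
    moreover have "inj_on \<sigma> S" using inj by (rule inj_on_subset) simp
    ultimately have "\<sigma> ` S = S" by (rule endo_inj_surj)
    moreover have "y \<in> S" unfolding S_def using q(3) by simp
    ultimately show ?thesis by (metis rangeI image_iff)
  qed
  then have "bij \<sigma>" using inj by (simp add: bij_def surj_def) (metis rangeE)
  then show ?thesis
    using \<sigma> by (simp add: field_aut_def field_hom_on_def)
qed

section \<open>Extending embeddings to automorphisms\<close>

text \<open>Embeddings of subfields into the ambient field, represented by their graphs so that Zorn's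
  lemma applies to the inclusion order.\<close>

definition partial_embedding :: "('a::field \<times> 'a) set \<Rightarrow> bool" where
  "partial_embedding G \<longleftrightarrow> sub_field (Domain G) \<and> single_valued G \<and> (1, 1) \<in> G \<and>
     (\<forall>x a y b. (x, a) \<in> G \<longrightarrow> (y, b) \<in> G \<longrightarrow> (x + y, a + b) \<in> G \<and> (x * y, a * b) \<in> G)"

lemma partial_embeddingD:
  assumes "partial_embedding G"
  shows "sub_field (Domain G)" "single_valued G" "(1, 1) \<in> G"
    "(x, a) \<in> G \<Longrightarrow> (y, b) \<in> G \<Longrightarrow> (x + y, a + b) \<in> G"
    "(x, a) \<in> G \<Longrightarrow> (y, b) \<in> G \<Longrightarrow> (x * y, a * b) \<in> G"
  using assms by (simp_all add: partial_embedding_def)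

definition graph_fun :: "('a \<times> 'b) set \<Rightarrow> 'a \<Rightarrow> 'b" where
  "graph_fun G x = (THE a. (x, a) \<in> G)"

lemma graph_fun_eq: "single_valued G \<Longrightarrow> (x, a) \<in> G \<Longrightarrow> graph_fun G x = a"
  unfolding graph_fun_def by (blast dest: single_valuedD)

lemma graph_fun_mem: "single_valued G \<Longrightarrow> x \<in> Domain G \<Longrightarrow> (x, graph_fun G x) \<in> G"
  using graph_fun_eq by fastforce

lemma field_hom_on_graph_fun:
  assumes G: "partial_embedding G"
  shows "field_hom_on (Domain G) (graph_fun G)"
proof -
  note sv = partial_embeddingD(2)[OF G] and closed = partial_embeddingD(4,5)[OF G]
  have "(0, graph_fun G 0) \<in> G" using graph_fun_mem[OF sv sub_field_zero[OF partial_embeddingD(1)[OF G]]] .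
  then have "(0, graph_fun G 0 + graph_fun G 0) \<in> G" using closed(1) by fastforce
  then have "graph_fun G 0 = graph_fun G 0 + graph_fun G 0" by (rule graph_fun_eq[OF sv])
  then have "graph_fun G 0 = 0" by (metis add_cancel_right_right)
  moreover have "graph_fun G 1 = 1" using partial_embeddingD(3)[OF G] by (rule graph_fun_eq[OF sv])
  moreover have "graph_fun G (x + y) = graph_fun G x + graph_fun G y"
      "graph_fun G (x * y) = graph_fun G x * graph_fun G y" if "x \<in> Domain G" "y \<in> Domain G" for x y
    using closed[OF graph_fun_mem[OF sv that(1)] graph_fun_mem[OF sv that(2)]]
    by (simp_all add: graph_fun_eq[OF sv])
  ultimately show ?thesis by (simp add: field_hom_on_def)
qed

lemma partial_embedding_Id_on: "sub_field K \<Longrightarrow> partial_embedding (Id_on K)"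
  by (auto simp: partial_embedding_def single_valued_def sub_field_def)

lemma partial_embedding_Union_chain:
  assumes "C \<noteq> {}" and emb: "\<forall>G\<in>C. partial_embedding G" and chain: "\<forall>G\<in>C. \<forall>H\<in>C. G \<subseteq> H \<or> H \<subseteq> G"
  shows "partial_embedding (\<Union>C)"
proof -
  have common: "\<exists>G\<in>C. (x, a) \<in> G \<and> (y, b) \<in> G" if "(x, a) \<in> \<Union>C" "(y, b) \<in> \<Union>C" for x a y b
    using that chain by blast
  have closed: "(x + y, a + b) \<in> \<Union>C \<and> (x * y, a * b) \<in> \<Union>C"
    if xy: "(x, a) \<in> \<Union>C" "(y, b) \<in> \<Union>C" for x a y b
  proof -
    obtain G where G: "G \<in> C" "(x, a) \<in> G" "(y, b) \<in> G" using common[OF xy] by blast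
    then show ?thesis using partial_embeddingD(4,5)[of G] emb by blast
  qed
  have sv: "single_valued (\<Union>C)"
  proof (rule single_valuedI)
    fix x a b assume "(x, a) \<in> \<Union>C" "(x, b) \<in> \<Union>C"
    then obtain G where G: "G \<in> C" "(x, a) \<in> G" "(x, b) \<in> G" using common by blast
    then show "a = b" using partial_embeddingD(2)[of G] emb single_valuedD by metis
  qed
  obtain G0 where G0: "G0 \<in> C" using \<open>C \<noteq> {}\<close> by blast
  then have one: "(1, 1) \<in> \<Union>C" using partial_embeddingD(3) emb by blast
  have dom: "- x \<in> Domain (\<Union>C) \<and> (x \<noteq> 0 \<longrightarrow> inverse x \<in> Domain (\<Union>C))"
    if x: "x \<in> Domain (\<Union>C)" for x
  proof -
    obtain G where G: "G \<in> C" "x \<in> Domain G" using x by blast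
    then have "sub_field (Domain G)" using partial_embeddingD(1) emb by blast
    then have "- x \<in> Domain G" "inverse x \<in> Domain G"
      using G(2) by (simp_all add: sub_field_uminus sub_field_inverse)
    then show ?thesis using G(1) by blast
  qed
  have "0 \<in> Domain G0"
    using G0 emb partial_embeddingD(1) sub_field_zero by blast
  then have "sub_field (Domain (\<Union>C))"
    unfolding sub_field_def using G0 one closed dom by blast
  then show ?thesis unfolding partial_embedding_def using sv one closed by blast
qed

lemma exists_minimal_poly:
  assumes "algebraic_over k \<alpha>" "k \<subseteq> F"
  obtains p where "p \<in> polys_over F" "p \<noteq> 0" "poly p \<alpha> = 0"
    "\<And>q. q \<in> polys_over F \<Longrightarrow> q \<noteq> 0 \<Longrightarrow> poly q \<alpha> = 0 \<Longrightarrow> degree p \<le> degree q"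
proof -
  have "\<exists>p. p \<in> polys_over F \<and> p \<noteq> 0 \<and> poly p \<alpha> = 0"
    using assms unfolding algebraic_over_def mem_polys_over by blast
  then show ?thesis
    using that ex_has_least_nat[of "\<lambda>p. p \<in> polys_over F \<and> p \<noteq> 0 \<and> poly p \<alpha> = 0" _ degree] by blast
qed

lemma sub_field_polys_over_values:
  fixes F :: "'a::field set"
  assumes F: "sub_field F" and alg: "\<forall>x. algebraic_over k x" and kF: "k \<subseteq> F"
  shows "sub_field {poly g \<alpha> | g. g \<in> polys_over F}"
proof -
  define R where "R = {poly g \<alpha> | g. g \<in> polys_over F}"
  have mem: "y \<in> R" if "y = poly g \<alpha>" "g \<in> polys_over F" for y g
    unfolding R_def using that by blast
  have inverse: "inverse y \<in> R" if "y \<in> R" "y \<noteq> 0" for y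
  proof -
    obtain g where g: "y = poly g \<alpha>" "g \<in> polys_over F" using \<open>y \<in> R\<close> unfolding R_def by blast
    obtain q where q: "q \<in> polys_over F" "q \<noteq> 0" "poly q y = 0"
      and q_min: "\<And>q'. q' \<in> polys_over F \<Longrightarrow> q' \<noteq> 0 \<Longrightarrow> poly q' y = 0 \<Longrightarrow> degree q \<le> degree q'"
      using exists_minimal_poly[OF spec[OF alg] kF] by metis
    \<comment> \<open>the constant term of a minimal polynomial of \<open>y \<noteq> 0\<close> is nonzero, which makes \<open>1/y\<close> a
      polynomial in \<open>y\<close>\<close>
    obtain c h where qc: "q = pCons c h" by (rule pCons_cases)
    have h: "h \<in> polys_over F" "c \<in> F" using q(1) qc pCons_polys_over_iff[OF F] by auto
    have "c \<noteq> 0"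
    proof
      assume "c = 0"
      then have "poly h y = 0" "h \<noteq> 0" using q(2,3) qc \<open>y \<noteq> 0\<close> by auto
      then show False using q_min[OF h(1)] qc by fastforce
    qed
    have "c = - (y * poly h y)" using q(3) qc by (simp add: eq_neg_iff_add_eq_0)
    then have "inverse y = poly (smult (- 1 / c) (pcompose h g)) \<alpha>"
      using \<open>y \<noteq> 0\<close> \<open>c \<noteq> 0\<close> g(1) by (simp add: poly_pcompose field_simps)
    moreover have "smult (- 1 / c) (pcompose h g) \<in> polys_over F"
      using h g(2) F by (intro smult_polys_over pcompose_polys_over sub_field_divide sub_field_uminus sub_field_one)
    ultimately show ?thesis by (rule mem)
  qed
  have zero_one: "0 \<in> R" "1 \<in> R"
    using mem[of 0 0] mem[of 1 "[:1:]"] F by (simp_all add: zero_polys_over const_polys_over sub_field_one)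
  have closed: "- x \<in> R" "x + y \<in> R" "x * y \<in> R" if xy: "x \<in> R" "y \<in> R" for x y
  proof -
    obtain g h where gh: "x = poly g \<alpha>" "g \<in> polys_over F" "y = poly h \<alpha>" "h \<in> polys_over F"
      using xy unfolding R_def by blast
    show "- x \<in> R" by (rule mem[of _ "- g"]) (simp_all add: gh uminus_polys_over[OF F])
    show "x + y \<in> R" by (rule mem[of _ "g + h"]) (simp_all add: gh add_polys_over[OF F])
    show "x * y \<in> R" by (rule mem[of _ "g * h"]) (simp_all add: gh mult_polys_over[OF F])
  qed
  have "sub_field R"
    unfolding sub_field_def using zero_one closed inverse by (intro conjI ballI impI) simp_all
  then show ?thesis unfolding R_def .
qed

lemma extend_partial_embedding:
  fixes G :: "('a::field \<times> 'a) set"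
  defines "F \<equiv> Domain G" and "\<phi> \<equiv> graph_fun G"
  assumes G: "partial_embedding G" and alg: "\<forall>x. algebraic_over k x" and kF: "k \<subseteq> F"
    and p: "p \<in> polys_over F" "p \<noteq> 0" "poly p \<alpha> = 0"
    and p_min: "\<And>q. q \<in> polys_over F \<Longrightarrow> q \<noteq> 0 \<Longrightarrow> poly q \<alpha> = 0 \<Longrightarrow> degree p \<le> degree q"
    and \<beta>: "poly (map_poly \<phi> p) \<beta> = 0"
  shows "\<exists>G'. partial_embedding G' \<and> G \<subseteq> G' \<and> (\<alpha>, \<beta>) \<in> G'"
proof -
  have F: "sub_field F" and sv: "single_valued G" unfolding F_def using partial_embeddingD[OF G] by auto
  have \<phi>: "field_hom_on F \<phi>" unfolding F_def \<phi>_def using field_hom_on_graph_fun[OF G] .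
  \<comment> \<open>by minimality, \<open>p\<close> divides every polynomial over \<open>F\<close> vanishing at \<open>\<alpha>\<close>\<close>
  have root: "poly (map_poly \<phi> g) \<beta> = 0" if g: "g \<in> polys_over F" "poly g \<alpha> = 0" for g
  proof -
    obtain q r where qr: "q \<in> polys_over F" "r \<in> polys_over F" "g = q * p + r" "r = 0 \<or> degree r < degree p"
      using polys_over_division[OF F p(1,2) g(1)] by blast
    have "poly r \<alpha> = 0" using g(2) p(3) qr(3) by simp
    then have "r = 0" using qr(2,4) p_min by fastforce
    then show ?thesis using qr \<beta> by (simp add: map_poly_mult_hom[OF F \<phi> qr(1) p(1)])
  qed
  define G' where "G' = {(poly g \<alpha>, poly (map_poly \<phi> g) \<beta>) | g. g \<in> polys_over F}"
  have mem_G': "(poly g \<alpha>, poly (map_poly \<phi> g) \<beta>) \<in> G'" if "g \<in> polys_over F" for g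
    unfolding G'_def using that by blast
  have Domain_G': "Domain G' = {poly g \<alpha> | g. g \<in> polys_over F}"
    unfolding G'_def by auto
  have "single_valued G'"
  proof (rule single_valuedI)
    fix x y z assume "(x, y) \<in> G'" "(x, z) \<in> G'"
    then obtain g h where gh: "x = poly g \<alpha>" "y = poly (map_poly \<phi> g) \<beta>" "g \<in> polys_over F"
        "x = poly h \<alpha>" "z = poly (map_poly \<phi> h) \<beta>" "h \<in> polys_over F"
      unfolding G'_def by blast
    then have "poly (map_poly \<phi> (g - h)) \<beta> = 0" using root diff_polys_over[OF F] by simp
    then show "y = z" using gh map_poly_diff_hom[OF F \<phi>] by simp
  qed
  moreover have closed: "(x + y, a + b) \<in> G' \<and> (x * y, a * b) \<in> G'"
    if xy: "(x, a) \<in> G'" "(y, b) \<in> G'" for x a y b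
  proof -
    obtain g h where gh: "x = poly g \<alpha>" "a = poly (map_poly \<phi> g) \<beta>" "g \<in> polys_over F"
        "y = poly h \<alpha>" "b = poly (map_poly \<phi> h) \<beta>" "h \<in> polys_over F"
      using xy unfolding G'_def by blast
    show ?thesis
      using mem_G'[OF add_polys_over[OF F gh(3,6)]] mem_G'[OF mult_polys_over[OF F gh(3,6)]]
      by (simp add: gh map_poly_add_hom[OF F \<phi>] map_poly_mult_hom[OF F \<phi>])
  qed
  moreover have const: "(c, \<phi> c) \<in> G'" if "c \<in> F" for c
    using mem_G'[OF const_polys_over[OF F that]] by (simp add: map_poly_const_hom[OF F \<phi>])
  moreover have "sub_field (Domain G')"
    unfolding Domain_G' by (rule sub_field_polys_over_values[OF F alg kF])
  moreover have "G \<subseteq> G'"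
    using const graph_fun_eq[OF sv] unfolding F_def \<phi>_def by force
  moreover have "(\<alpha>, \<beta>) \<in> G'"
    using mem_G'[of "[:0, 1:]"] F by (simp add: pCons_polys_over_iff sub_field_zero sub_field_one
        zero_polys_over map_poly_pCons field_hom_on_zero[OF F \<phi>] field_hom_on_one[OF F \<phi>])
  moreover have "(1, 1) \<in> G'" using const[of 1] F by (simp add: sub_field_one field_hom_on_one[OF F \<phi>])
  ultimately show ?thesis unfolding partial_embedding_def by blast
qed

lemma extend_partial_embedding_to:
  fixes G :: "('a::field \<times> 'a) set"
  assumes ac: "alg_closed TYPE('a)" and G: "partial_embedding G"
    and alg: "\<forall>x. algebraic_over k x" and k: "k \<subseteq> Domain G"
  shows "\<exists>G'. partial_embedding G' \<and> G \<subseteq> G' \<and> \<alpha> \<in> Domain G'"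
proof -
  have F: "sub_field (Domain G)" using partial_embeddingD(1)[OF G] .
  have \<phi>: "field_hom_on (Domain G) (graph_fun G)" using field_hom_on_graph_fun[OF G] .
  obtain p where p: "p \<in> polys_over (Domain G)" "p \<noteq> 0" "poly p \<alpha> = 0"
    and p_min: "\<And>q. q \<in> polys_over (Domain G) \<Longrightarrow> q \<noteq> 0 \<Longrightarrow> poly q \<alpha> = 0 \<Longrightarrow> degree p \<le> degree q"
    using exists_minimal_poly[OF spec[OF alg] k] by metis
  have "degree p \<noteq> 0"
  proof
    assume "degree p = 0"
    then obtain c where "p = [:c:]" by (rule degree_eq_zeroE)
    then show False using p(2,3) by simp
  qed
  moreover have "graph_fun G (lead_coeff p) \<noteq> 0"
    using p(1,2) by (intro field_hom_on_nonzero[OF F \<phi>]) (simp_all add: mem_polys_over)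
  ultimately have "degree (map_poly (graph_fun G) p) \<ge> 1" by (simp add: map_poly_degree_eq)
  then obtain \<beta> where "poly (map_poly (graph_fun G) p) \<beta> = 0" using ac by (auto simp: alg_closed_def)
  then show ?thesis using extend_partial_embedding[OF G alg k p p_min] by blast
qed

lemma poly_neg_root_of_quadratic:
  assumes K: "sub_field K" "r \<notin> K" "r * r \<in> K"
    and p: "p \<in> polys_over K" "degree p \<le> 2" "poly p r = 0"
  shows "poly p (- r) = 0"
proof -
  define a b c where "a = coeff p 0" and "b = coeff p 1" and "c = coeff p 2"
  have abc: "a \<in> K" "b \<in> K" "c \<in> K" using p(1) unfolding a_def b_def c_def mem_polys_over by auto
  have "p = [:a, b, c:]"
    using p(2) unfolding a_def b_def c_def
    by (intro poly_eqI) (auto simp: coeff_pCons coeff_eq_0 numeral_2_eq_2 split: nat.split)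
  then have val: "poly p x = a + c * (x * x) + b * x" for x by (simp add: algebra_simps)
  have "b = 0"
  proof (rule ccontr)
    assume "b \<noteq> 0"
    then have "r = - (a + c * (r * r)) / b" using p(3) val[of r] by (simp add: field_simps eq_neg_iff_add_eq_0)
    then show False using K abc by (metis sub_field_add sub_field_divide sub_field_mult sub_field_uminus)
  qed
  then show ?thesis using p(3) val by simp
qed

lemma exists_field_aut_extending:
  fixes G0 :: "('a::field \<times> 'a) set"
  assumes ac: "alg_closed TYPE('a)" and alg: "\<forall>x. algebraic_over k x"
    and G0: "partial_embedding G0" "Id_on k \<subseteq> G0"
  shows "\<exists>\<sigma>. field_aut \<sigma> \<and> (\<forall>x a. (x, a) \<in> G0 \<longrightarrow> \<sigma> x = a)"
proof -
  define A where "A = {G. partial_embedding G \<and> G0 \<subseteq> G}"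
  have "\<Union>C \<in> A" if C: "C \<noteq> {}" "subset.chain A C" for C
  proof -
    have "C \<subseteq> A" "\<forall>X\<in>C. \<forall>Y\<in>C. X \<subseteq> Y \<or> Y \<subseteq> X" using C(2) by (simp_all add: subset_chain_def)
    then have "partial_embedding (\<Union>C)" using partial_embedding_Union_chain[OF C(1)] A_def by blast
    moreover have "G0 \<subseteq> \<Union>C" using \<open>C \<subseteq> A\<close> C(1) A_def by blast
    ultimately show ?thesis by (simp add: A_def)
  qed
  moreover have "A \<noteq> {}" using G0(1) A_def by blast
  ultimately obtain M where "M \<in> A" "\<forall>X\<in>A. M \<subseteq> X \<longrightarrow> X = M"
    using subset_Zorn_nonempty[of A] by blast
  then have M: "partial_embedding M" "G0 \<subseteq> M"
    and M_max: "\<And>G. partial_embedding G \<Longrightarrow> M \<subseteq> G \<Longrightarrow> G = M"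
    unfolding A_def by blast+
  have "Domain M = UNIV"
  proof (intro set_eqI iffI UNIV_I)
    fix \<alpha>
    have "k \<subseteq> Domain M" using G0(2) M(2) by auto
    then obtain G where "partial_embedding G" "M \<subseteq> G" "\<alpha> \<in> Domain G"
      using extend_partial_embedding_to[OF ac M(1) alg] by blast
    then show "\<alpha> \<in> Domain M" using M_max by blast
  qed
  then have \<sigma>: "field_hom_on UNIV (graph_fun M)" using field_hom_on_graph_fun[OF M(1)] by simp
  have extends: "graph_fun M x = a" if "(x, a) \<in> G0" for x a
    using that M(2) by (intro graph_fun_eq partial_embeddingD(2)[OF M(1)]) auto
  then have "\<forall>x\<in>k. graph_fun M x = x" using G0(2) by auto
  then show ?thesis using field_aut_if_field_hom_on_UNIV[OF alg \<sigma>] extends by blast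
qed

lemma exists_partial_embedding_neg:
  fixes k K :: "'a::field set"
  assumes alg: "\<forall>x. algebraic_over k x" and kK: "k \<subseteq> K"
    and K: "sub_field K" "r \<notin> K" "r * r \<in> K"
  shows "\<exists>G. partial_embedding G \<and> Id_on K \<subseteq> G \<and> (r, - r) \<in> G"
proof -
  have Id: "partial_embedding (Id_on K)" using partial_embedding_Id_on[OF K(1)] .
  obtain p where p: "p \<in> polys_over K" "p \<noteq> 0" "poly p r = 0"
    and p_min: "\<And>q. q \<in> polys_over K \<Longrightarrow> q \<noteq> 0 \<Longrightarrow> poly q r = 0 \<Longrightarrow> degree p \<le> degree q"
    using exists_minimal_poly[OF spec[OF alg] kK] by metis
  \<comment> \<open>\<open>-r\<close> is a conjugate of \<open>r\<close> over \<open>K\<close>, as \<open>X\<^sup>2 - r\<^sup>2\<close> bounds the degree of its minimal polynomial\<close>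
  have "[:- (r * r), 0, 1:] \<in> polys_over K"
    using K by (simp add: pCons_polys_over_iff zero_polys_over sub_field_zero sub_field_one sub_field_uminus)
  then have "degree p \<le> 2" using p_min[of "[:- (r * r), 0, 1:]"] by simp
  moreover have "graph_fun (Id_on K) x = x" if "x \<in> K" for x
    using that by (intro graph_fun_eq) (auto simp: single_valued_def)
  then have "map_poly (graph_fun (Id_on K)) p = p"
    using p(1) by (intro poly_eqI) (simp add: coeff_map_poly mem_polys_over K(1) sub_field_zero)
  ultimately have "poly (map_poly (graph_fun (Id_on K)) p) (- r) = 0"
    using poly_neg_root_of_quadratic[OF K p(1) _ p(3)] by simp
  then show ?thesis using extend_partial_embedding[OF Id alg, unfolded Domain_Id_on, OF kK p p_min] by blast
qed

lemma exists_field_aut_neg: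
  fixes k K :: "'a::field set"
  assumes ac: "alg_closed TYPE('a)" and alg: "\<forall>x. algebraic_over k x" and kK: "k \<subseteq> K"
    and K: "sub_field K" "r \<notin> K" "r * r \<in> K"
  shows "\<exists>\<sigma>. field_aut \<sigma> \<and> (\<forall>x\<in>K. \<sigma> x = x) \<and> \<sigma> r = - r"
proof -
  obtain G0 where G0: "partial_embedding G0" "Id_on K \<subseteq> G0" "(r, - r) \<in> G0"
    using exists_partial_embedding_neg[OF alg kK K] by blast
  moreover have "Id_on k \<subseteq> G0" using G0(2) kK by auto
  ultimately obtain \<sigma> where \<sigma>: "field_aut \<sigma>" "\<forall>x a. (x, a) \<in> G0 \<longrightarrow> \<sigma> x = a"
    using exists_field_aut_extending[OF ac alg] by blast
  moreover have "\<sigma> x = x" if "x \<in> K" for x using \<sigma>(2) G0(2) that by blast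
  ultimately show ?thesis using G0(3) by blast
qed

lemma is_field_of_def_adjoin_sqrt:
  fixes k :: "'a::field set" and Y :: "'a poly set set"
  assumes ac: "alg_closed TYPE('a)" and k: "sub_field k" and alg: "\<forall>x. algebraic_over k x"
    and r: "r * r \<in> k" "r \<noteq> - r"
    and stable_iff: "\<And>\<sigma>. field_aut \<sigma> \<Longrightarrow> \<forall>x\<in>k. \<sigma> x = x \<Longrightarrow> act_lines \<sigma> Y = Y \<longleftrightarrow> \<sigma> r = r"
  shows "is_field_of_def k Y (adjoin k r)"
  unfolding is_field_of_def_def
proof (intro conjI allI impI ballI sub_field_adjoin subset_adjoin)
  fix \<sigma> assume "\<sigma> \<in> Gal (adjoin k r)"
  then have \<sigma>: "field_aut \<sigma>" "\<forall>x\<in>adjoin k r. \<sigma> x = x" by (simp_all add: Gal_def)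
  then have "\<forall>x\<in>k. \<sigma> x = x" "\<sigma> r = r" using subset_adjoin mem_adjoin by blast+
  then show "act_lines \<sigma> Y = Y" using stable_iff \<sigma>(1) by blast
next
  fix k' assume k': "sub_field k' \<and> k \<subseteq> k' \<and> (\<forall>\<sigma>\<in>Gal k'. act_lines \<sigma> Y = Y)"
  have "r \<in> k'"
  proof (rule ccontr)
    assume "r \<notin> k'"
    moreover have "r * r \<in> k'" using r(1) k' by blast
    ultimately obtain \<sigma> where \<sigma>: "field_aut \<sigma>" "\<forall>x\<in>k'. \<sigma> x = x" "\<sigma> r = - r"
      using exists_field_aut_neg[OF ac alg] k' by blast
    then have "act_lines \<sigma> Y = Y" using k' by (simp add: Gal_def)
    moreover have "\<forall>x\<in>k. \<sigma> x = x" using \<sigma>(2) k' by blast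
    ultimately have "\<sigma> r = r" using stable_iff \<sigma>(1) by blast
    then show False using \<sigma>(3) r(2) by simp
  qed
  then show "adjoin k r \<subseteq> k'" using adjoin_least k' by blast
qed

section \<open>The lines on \<open>V\<^sub>f\<^sub>,\<^sub>\<delta>\<close> and their parity classes\<close>

locale sextic_twist =
  fixes k :: "'a::field set" and f \<delta> :: "'a poly"
  assumes alg_closed: "alg_closed TYPE('a)" and sub_field_k: "sub_field k" and two_nonzero: "(2::'a) \<noteq> 0"
    and f_over_k: "\<forall>i. coeff f i \<in> k" and degree_f: "degree f = 6" and rsquarefree_f: "rsquarefree f"
    and \<delta>_over_k: "\<forall>i. coeff \<delta> i \<in> k" and \<delta>_unit: "\<exists>u. (\<forall>i. coeff u i \<in> k) \<and> (\<delta> * u) mod f = 1"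
begin

definition \<Omega> :: "'a set" where "\<Omega> = {\<theta>. poly f \<theta> = 0}"

lemma f_nonzero: "f \<noteq> 0"
  using rsquarefree_f by (simp add: rsquarefree_def)

lemma finite_\<Omega>: "finite \<Omega>"
  unfolding \<Omega>_def using poly_roots_finite[OF f_nonzero] .

lemma card_\<Omega>: "card \<Omega> = 6"
  unfolding \<Omega>_def using card_roots_rsquarefree[OF alg_closed rsquarefree_f] degree_f by simp

lemma f_dvd_iff: "f dvd q \<longleftrightarrow> (\<forall>\<theta>\<in>\<Omega>. poly q \<theta> = 0)"
proof
  assume "\<forall>\<theta>\<in>\<Omega>. poly q \<theta> = 0"
  then have "(\<Prod>a\<in>\<Omega>. [:-a, 1:]) dvd q" using prod_linear_dvd_if_roots[OF finite_\<Omega>] by blast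
  then have "smult (lead_coeff f) (\<Prod>a\<in>\<Omega>. [:-a, 1:]) dvd q" using f_nonzero by (simp add: smult_dvd)
  moreover obtain xs where "distinct xs" "set xs = \<Omega>" "is_root_list f xs"
    using rsquarefree_root_list[OF alg_closed rsquarefree_f] unfolding \<Omega>_def by blast
  then have "f = smult (lead_coeff f) (\<Prod>a\<in>\<Omega>. [:-a, 1:])"
    unfolding is_root_list_def by (metis prod.distinct_set_conv_list)
  ultimately show "f dvd q" by simp
qed (auto simp: \<Omega>_def)

lemma mod_f_eq_iff: "a mod f = b mod f \<longleftrightarrow> (\<forall>\<theta>\<in>\<Omega>. poly a \<theta> = poly b \<theta>)"
  by (simp add: mod_eq_dvd_iff f_dvd_iff)

lemma poly_mod_f: "\<theta> \<in> \<Omega> \<Longrightarrow> poly (a mod f) \<theta> = poly a \<theta>"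
  by (simp add: \<Omega>_def poly_mod)

lemma one_mod_f: "1 mod f = 1"
  using degree_f by (simp add: mod_poly_less)

lemma exists_inverse_mod_f:
  assumes "\<forall>\<theta>\<in>\<Omega>. poly e \<theta> \<noteq> 0"
  shows "\<exists>u. (u * e) mod f = 1"
proof -
  obtain u where "\<forall>\<theta>\<in>\<Omega>. poly u \<theta> = inverse (poly e \<theta>)"
    using exists_interpolating_poly[OF finite_\<Omega>, of "\<lambda>\<theta>. inverse (poly e \<theta>)"] by blast
  then have "(u * e) mod f = 1 mod f" using assms by (simp add: mod_f_eq_iff)
  then show ?thesis using one_mod_f by auto
qed

lemma poly_\<delta>_nonzero:
  assumes "\<theta> \<in> \<Omega>"
  shows "poly \<delta> \<theta> \<noteq> 0"
proof -
  obtain u where "(\<delta> * u) mod f = 1" using \<delta>_unit by blast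
  then have "poly \<delta> \<theta> * poly u \<theta> = 1" using poly_mod_f[OF assms, of "\<delta> * u"] by simp
  then show ?thesis by auto
qed

lemma is_sqrt_mod_iff: "is_sqrt_mod f \<delta> e \<longleftrightarrow> (\<forall>\<theta>\<in>\<Omega>. poly e \<theta> * poly e \<theta> = poly \<delta> \<theta>)"
  by (simp add: is_sqrt_mod_def mod_f_eq_iff)

lemma poly_sqrt_nonzero: "is_sqrt_mod f \<delta> e \<Longrightarrow> \<theta> \<in> \<Omega> \<Longrightarrow> poly e \<theta> \<noteq> 0"
  using is_sqrt_mod_iff poly_\<delta>_nonzero by fastforce

lemma exists_sqrt_mod: "\<exists>e. is_sqrt_mod f \<delta> e"
proof -
  have "\<exists>x. x * x = poly \<delta> \<theta>" for \<theta>
  proof -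
    have "degree [:- poly \<delta> \<theta>, 0, 1:] \<ge> 1" by simp
    then obtain x where "poly [:- poly \<delta> \<theta>, 0, 1:] x = 0" using alg_closed unfolding alg_closed_def by blast
    then show ?thesis by (intro exI[of _ x]) (simp add: algebra_simps)
  qed
  then obtain sqrt where "\<And>\<theta>. sqrt \<theta> * sqrt \<theta> = poly \<delta> \<theta>" by metis
  moreover obtain e where "\<forall>\<theta>\<in>\<Omega>. poly e \<theta> = sqrt \<theta>"
    using exists_interpolating_poly[OF finite_\<Omega>, of sqrt] by blast
  ultimately have "is_sqrt_mod f \<delta> e" by (simp add: is_sqrt_mod_iff)
  then show ?thesis by blast
qed

lemma sqrt_mod_sign:
  assumes "is_sqrt_mod f \<delta> e" "is_sqrt_mod f \<delta> e'" "\<theta> \<in> \<Omega>"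
  shows "poly e' \<theta> = poly e \<theta> \<or> poly e' \<theta> = - poly e \<theta>"
  using assms by (metis is_sqrt_mod_iff square_eq_iff)

lemma mem_line_of_iff:
  assumes "is_sqrt_mod f \<delta> e"
  shows "p \<in> line_of f e \<longleftrightarrow>
    degree p < degree f \<and> (\<exists>s t. \<forall>\<theta>\<in>\<Omega>. poly p \<theta> * poly e \<theta> = s * \<theta> + t)"
proof
  assume "p \<in> line_of f e"
  then obtain u s t where ust: "(u * e) mod f = 1" "p = (u * [:t, s:]) mod f"
    unfolding line_of_def by blast
  have "poly p \<theta> * poly e \<theta> = s * \<theta> + t" if "\<theta> \<in> \<Omega>" for \<theta>
  proof -
    have "poly u \<theta> * poly e \<theta> = 1" using poly_mod_f[OF that, of "u * e"] ust(1) by simp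
    moreover have "poly p \<theta> = poly u \<theta> * (s * \<theta> + t)"
      using poly_mod_f[OF that, of "u * [:t, s:]"] ust(2) by (simp add: algebra_simps)
    ultimately show ?thesis by (simp add: mult.commute mult.left_commute)
  qed
  moreover have "degree p < degree f"
    using degree_mod_less[OF f_nonzero, of "u * [:t, s:]"] ust(2) degree_f by auto
  ultimately show "degree p < degree f \<and> (\<exists>s t. \<forall>\<theta>\<in>\<Omega>. poly p \<theta> * poly e \<theta> = s * \<theta> + t)"
    by blast
next
  assume p: "degree p < degree f \<and> (\<exists>s t. \<forall>\<theta>\<in>\<Omega>. poly p \<theta> * poly e \<theta> = s * \<theta> + t)"
  then obtain s t where st: "\<forall>\<theta>\<in>\<Omega>. poly p \<theta> * poly e \<theta> = s * \<theta> + t" by blast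
  obtain u where u: "(u * e) mod f = 1"
    using exists_inverse_mod_f poly_sqrt_nonzero[OF assms] by blast
  have "poly p \<theta> = poly (u * [:t, s:]) \<theta>" if "\<theta> \<in> \<Omega>" for \<theta>
  proof -
    have "poly u \<theta> * poly e \<theta> = 1" using poly_mod_f[OF that, of "u * e"] u by simp
    then have "poly p \<theta> = poly u \<theta> * (poly p \<theta> * poly e \<theta>)"
      by (metis mult.left_commute mult_1_right)
    also have "\<dots> = poly (u * [:t, s:]) \<theta>" using st that by (simp add: algebra_simps)
    finally show ?thesis .
  qed
  then have "p mod f = (u * [:t, s:]) mod f" by (simp add: mod_f_eq_iff)
  moreover have "p mod f = p" using p by (simp add: mod_poly_less)
  ultimately show "p \<in> line_of f e" unfolding line_of_def using u by auto
qed

lemma norm_A_eq_prod_\<Omega>: "norm_A f e = (\<Prod>\<theta>\<in>\<Omega>. poly e \<theta>)"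
  by (simp add: norm_A_def \<Omega>_def)

lemma norm_A_sqrt_square: "is_sqrt_mod f \<delta> e \<Longrightarrow> norm_A f e * norm_A f e = norm_A f \<delta>"
  by (simp add: norm_A_eq_prod_\<Omega> is_sqrt_mod_iff flip: prod.distrib)

lemma norm_A_sqrt_nonzero: "is_sqrt_mod f \<delta> e \<Longrightarrow> norm_A f e \<noteq> 0"
  by (simp add: norm_A_eq_prod_\<Omega> finite_\<Omega> poly_sqrt_nonzero)

lemma even_sign_changes_iff_norm_A_eq:
  assumes e: "is_sqrt_mod f \<delta> e" and e': "is_sqrt_mod f \<delta> e'"
  shows "even (card {\<theta>. poly f \<theta> = 0 \<and> poly e' \<theta> / poly e \<theta> = -1}) \<longleftrightarrow> norm_A f e' = norm_A f e"
proof -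
  define S where "S = {\<theta>. poly f \<theta> = 0 \<and> poly e' \<theta> / poly e \<theta> = -1}"
  have "S \<subseteq> \<Omega>" unfolding S_def \<Omega>_def by auto
  have sign: "poly e' \<theta> = (if \<theta> \<in> S then -1 else 1) * poly e \<theta>" if "\<theta> \<in> \<Omega>" for \<theta>
    using sqrt_mod_sign[OF e e' that] poly_sqrt_nonzero[OF e that] that
    by (auto simp: S_def \<Omega>_def)
  have "norm_A f e' = (\<Prod>\<theta>\<in>\<Omega>. (if \<theta> \<in> S then -1 else 1)) * norm_A f e"
    unfolding norm_A_eq_prod_\<Omega> by (simp add: sign prod.distrib)
  also have "(\<Prod>\<theta>\<in>\<Omega>. (if \<theta> \<in> S then -1 else 1)) = (-1::'a) ^ card S"
    using \<open>S \<subseteq> \<Omega>\<close> finite_\<Omega> by (simp add: prod.If_cases Int_absorb1)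
  finally have "norm_A f e' = norm_A f e \<longleftrightarrow> (-1::'a) ^ card S = 1"
    using norm_A_sqrt_nonzero[OF e] by auto
  moreover have "(-1::'a) \<noteq> 1" using two_nonzero by (metis add_eq_0_iff one_add_one)
  then have "(-1::'a) ^ card S = 1 \<longleftrightarrow> even (card S)" by (simp add: minus_one_power_iff)
  ultimately show ?thesis unfolding S_def by simp
qed

lemma same_parity_iff:
  "same_parity f \<delta> L L' \<longleftrightarrow> (\<exists>e e'. is_sqrt_mod f \<delta> e \<and> is_sqrt_mod f \<delta> e' \<and>
     L = line_of f e \<and> L' = line_of f e' \<and> norm_A f e' = norm_A f e)"
  unfolding same_parity_def using even_sign_changes_iff_norm_A_eq by blast

lemma norm_A_eq_if_line_of_eq:
  assumes e: "is_sqrt_mod f \<delta> e" and e': "is_sqrt_mod f \<delta> e'" and L: "line_of f e = line_of f e'"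
  shows "norm_A f e = norm_A f e'"
proof -
  obtain u where u: "(u * e) mod f = 1"
    using exists_inverse_mod_f poly_sqrt_nonzero[OF e] by blast
  then have "(u * [:1, 0:]) mod f \<in> line_of f e" unfolding line_of_def by blast
  then have "(u * [:1, 0:]) mod f \<in> line_of f e'" using L by simp
  then obtain s t where st: "\<forall>\<theta>\<in>\<Omega>. poly u \<theta> * poly e' \<theta> = s * \<theta> + t"
    using mem_line_of_iff[OF e'] poly_mod_f by fastforce
  have ratio: "poly e' \<theta> = (s * \<theta> + t) * poly e \<theta>" if "\<theta> \<in> \<Omega>" for \<theta>
  proof -
    have "poly u \<theta> * poly e \<theta> = 1" using poly_mod_f[OF that, of "u * e"] u by simp
    then show ?thesis using st that by (metis mult.assoc mult.commute mult_1)
  qed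
  \<comment> \<open>\<open>(s\<theta> + t)\<^sup>2 = 1\<close> at six points forces \<open>s = 0\<close> and \<open>t = \<plusminus>1\<close>; the sign drops out of the norm
    because the number of roots is even\<close>
  define Q where "Q = [:t * t - 1, 2 * s * t, s * s:]"
  have "poly Q \<theta> = 0" if "\<theta> \<in> \<Omega>" for \<theta>
  proof -
    have "poly e' \<theta> * poly e' \<theta> = poly e \<theta> * poly e \<theta>" using e e' that by (simp add: is_sqrt_mod_iff)
    then have "((s * \<theta> + t) * (s * \<theta> + t) - 1) * (poly e \<theta> * poly e \<theta>) = 0"
      using ratio[OF that] by (simp add: algebra_simps)
    then have "(s * \<theta> + t) * (s * \<theta> + t) - 1 = 0" using poly_sqrt_nonzero[OF e that] by simp
    then show ?thesis by (simp add: Q_def algebra_simps)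
  qed
  moreover have "degree Q < card \<Omega>" unfolding Q_def card_\<Omega> by (simp add: degree_pCons_le)
  ultimately have "Q = 0" using poly_eq_0_if_card_roots_gt finite_\<Omega> by blast
  then have "s = 0" "t * t = 1" by (simp_all add: Q_def)
  then have "norm_A f e' = t ^ 6 * norm_A f e"
    unfolding norm_A_eq_prod_\<Omega> by (simp add: ratio prod.distrib card_\<Omega>)
  moreover have "t ^ 6 = (t * t) ^ 3" by (simp flip: power2_eq_square power_mult)
  ultimately show ?thesis using \<open>t * t = 1\<close> by simp
qed

context
  fixes \<tau> :: "'a \<Rightarrow> 'a"
  assumes \<tau>: "field_aut \<tau>" and \<tau>_fixes_k: "\<forall>x\<in>k. \<tau> x = x"
begin

lemma poly_map_poly_field_aut: "poly (map_poly \<tau> p) (\<tau> x) = \<tau> (poly p x)"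
  using poly_map_poly_hom[OF sub_field_UNIV field_hom_on_UNIV_if_field_aut[OF \<tau>]]
  by (simp add: mem_polys_over)

lemma map_poly_field_aut_over_k: "\<forall>i. coeff q i \<in> k \<Longrightarrow> map_poly \<tau> q = q"
  using \<tau>_fixes_k by (intro poly_eqI)
    (simp add: coeff_map_poly_hom[OF sub_field_UNIV field_hom_on_UNIV_if_field_aut[OF \<tau>]])

lemma field_aut_image_\<Omega>: "\<tau> ` \<Omega> = \<Omega>"
proof -
  have "\<tau> ` \<Omega> \<subseteq> \<Omega>"
    using poly_map_poly_field_aut[of f] map_poly_field_aut_over_k[OF f_over_k]
      field_hom_on_zero[OF sub_field_UNIV field_hom_on_UNIV_if_field_aut[OF \<tau>]]
    by (auto simp: \<Omega>_def)
  moreover have "inj_on \<tau> \<Omega>" using inj_field_aut[OF \<tau>] by (rule inj_on_subset) simp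
  ultimately show ?thesis using endo_inj_surj[OF finite_\<Omega>] by blast
qed

lemma is_sqrt_mod_map_poly:
  assumes "is_sqrt_mod f \<delta> e"
  shows "is_sqrt_mod f \<delta> (map_poly \<tau> e)"
  unfolding is_sqrt_mod_iff
proof
  fix \<theta>' assume "\<theta>' \<in> \<Omega>"
  then obtain \<theta> where \<theta>: "\<theta> \<in> \<Omega>" "\<theta>' = \<tau> \<theta>" using field_aut_image_\<Omega> by blast
  then have "\<tau> (poly e \<theta> * poly e \<theta>) = \<tau> (poly \<delta> \<theta>)" using assms by (simp add: is_sqrt_mod_iff)
  then show "poly (map_poly \<tau> e) \<theta>' * poly (map_poly \<tau> e) \<theta>' = poly \<delta> \<theta>'"
    using map_poly_field_aut_over_k[OF \<delta>_over_k] \<theta>(2)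
    by (simp add: poly_map_poly_field_aut field_aut_mult[OF \<tau>] flip: poly_map_poly_field_aut[of \<delta>])
qed

lemma norm_A_map_poly: "norm_A f (map_poly \<tau> e) = \<tau> (norm_A f e)"
proof -
  have "inj_on \<tau> \<Omega>" using inj_field_aut[OF \<tau>] by (rule inj_on_subset) simp
  have "norm_A f (map_poly \<tau> e) = prod (poly (map_poly \<tau> e)) (\<tau> ` \<Omega>)"
    by (simp add: norm_A_eq_prod_\<Omega> field_aut_image_\<Omega>)
  also have "\<dots> = (\<Prod>\<theta>\<in>\<Omega>. \<tau> (poly e \<theta>))"
    using \<open>inj_on \<tau> \<Omega>\<close> by (simp add: prod.reindex poly_map_poly_field_aut)
  also have "\<dots> = \<tau> (norm_A f e)"
    unfolding norm_A_eq_prod_\<Omega>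
    using field_hom_on_prod[OF sub_field_UNIV field_hom_on_UNIV_if_field_aut[OF \<tau>], where g = "poly e" and S = \<Omega>] by simp
  finally show ?thesis .
qed

lemma act_line_subset:
  assumes e: "is_sqrt_mod f \<delta> e"
  shows "act_line \<tau> (line_of f e) \<subseteq> line_of f (map_poly \<tau> e)"
proof
  fix q assume "q \<in> act_line \<tau> (line_of f e)"
  then obtain p where p: "p \<in> line_of f e" and q: "q = map_poly \<tau> p" unfolding act_line_def by blast
  obtain s t where deg: "degree p < degree f" and st: "\<forall>\<theta>\<in>\<Omega>. poly p \<theta> * poly e \<theta> = s * \<theta> + t"
    using p unfolding mem_line_of_iff[OF e] by blast
  have "\<tau> x = 0 \<longleftrightarrow> x = 0" for x
    using inj_eq[OF inj_field_aut[OF \<tau>], of x 0]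
      field_hom_on_zero[OF sub_field_UNIV field_hom_on_UNIV_if_field_aut[OF \<tau>]] by simp
  then have "degree q = degree p" unfolding q by (intro degree_map_poly) simp
  moreover have "poly q \<theta>' * poly (map_poly \<tau> e) \<theta>' = \<tau> s * \<theta>' + \<tau> t" if "\<theta>' \<in> \<Omega>" for \<theta>'
  proof -
    obtain \<theta> where \<theta>: "\<theta> \<in> \<Omega>" "\<theta>' = \<tau> \<theta>" using \<open>\<theta>' \<in> \<Omega>\<close> field_aut_image_\<Omega> by blast
    then have "\<tau> (poly p \<theta> * poly e \<theta>) = \<tau> (s * \<theta> + t)" using st by simp
    then show ?thesis unfolding \<theta>(2) q poly_map_poly_field_aut by (simp only: field_aut_add[OF \<tau>] field_aut_mult[OF \<tau>])
  qed
  ultimately show "q \<in> line_of f (map_poly \<tau> e)"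
    unfolding mem_line_of_iff[OF is_sqrt_mod_map_poly[OF e]] using deg by auto
qed

end

lemma act_line_line_of:
  assumes \<tau>: "field_aut \<tau>" "\<forall>x\<in>k. \<tau> x = x" and e: "is_sqrt_mod f \<delta> e"
  shows "act_line \<tau> (line_of f e) = line_of f (map_poly \<tau> e)"
proof
  show "act_line \<tau> (line_of f e) \<subseteq> line_of f (map_poly \<tau> e)" using act_line_subset[OF \<tau> e] .
  have inv: "field_aut (inv \<tau>)" "\<forall>x\<in>k. inv \<tau> x = x"
    using field_aut_inv[OF \<tau>(1)] \<tau>(2) inv_f_f[OF inj_field_aut[OF \<tau>(1)]] by metis+
  show "line_of f (map_poly \<tau> e) \<subseteq> act_line \<tau> (line_of f e)"
  proof
    fix q assume "q \<in> line_of f (map_poly \<tau> e)"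
    then have "map_poly (inv \<tau>) q \<in> act_line (inv \<tau>) (line_of f (map_poly \<tau> e))"
      unfolding act_line_def by blast
    then have "map_poly (inv \<tau>) q \<in> line_of f e"
      using act_line_subset[OF inv is_sqrt_mod_map_poly[OF \<tau> e]]
      by (auto simp: map_poly_field_aut_inv[OF \<tau>(1)])
    then show "q \<in> act_line \<tau> (line_of f e)"
      unfolding act_line_def
      by (intro image_eqI[where x = "map_poly (inv \<tau>) q"]) (simp_all add: map_poly_field_aut_inv[OF \<tau>(1)])
  qed
qed

definition lines_with_norm :: "'a \<Rightarrow> 'a poly set set" where
  "lines_with_norm c = {line_of f e | e. is_sqrt_mod f \<delta> e \<and> norm_A f e = c}"

lemma act_lines_lines_with_norm:
  assumes \<sigma>: "field_aut \<sigma>" "\<forall>x\<in>k. \<sigma> x = x"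
  shows "act_lines \<sigma> (lines_with_norm c) = lines_with_norm (\<sigma> c)"
proof
  show "act_lines \<sigma> (lines_with_norm c) \<subseteq> lines_with_norm (\<sigma> c)"
    unfolding act_lines_def lines_with_norm_def
    using act_line_line_of[OF \<sigma>] is_sqrt_mod_map_poly[OF \<sigma>] norm_A_map_poly[OF \<sigma>] by auto
  show "lines_with_norm (\<sigma> c) \<subseteq> act_lines \<sigma> (lines_with_norm c)"
  proof
    fix L assume "L \<in> lines_with_norm (\<sigma> c)"
    then obtain e where e: "is_sqrt_mod f \<delta> e" "norm_A f e = \<sigma> c" "L = line_of f e"
      unfolding lines_with_norm_def by blast
    have inv: "field_aut (inv \<sigma>)" "\<forall>x\<in>k. inv \<sigma> x = x"
      using field_aut_inv[OF \<sigma>(1)] \<sigma>(2) inv_f_f[OF inj_field_aut[OF \<sigma>(1)]] by metis+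
    define e' where "e' = map_poly (inv \<sigma>) e"
    have e': "is_sqrt_mod f \<delta> e'" "norm_A f e' = c"
      unfolding e'_def using is_sqrt_mod_map_poly[OF inv e(1)] norm_A_map_poly[OF inv] e(2)
        inv_f_f[OF inj_field_aut[OF \<sigma>(1)]] by simp_all
    have "L = act_line \<sigma> (line_of f e')"
      using act_line_line_of[OF \<sigma> e'(1)] e(3) map_poly_field_aut_inv(1)[OF \<sigma>(1)] by (simp add: e'_def)
    then show "L \<in> act_lines \<sigma> (lines_with_norm c)"
      unfolding act_lines_def lines_with_norm_def using e' by blast
  qed
qed

lemma lines_with_norm_uminus:
  assumes "lines_with_norm c \<noteq> {}"
  shows "lines_with_norm (- c) \<noteq> lines_with_norm c"
proof
  assume eq: "lines_with_norm (- c) = lines_with_norm c"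
  obtain e where e: "is_sqrt_mod f \<delta> e" "norm_A f e = c"
    using assms unfolding lines_with_norm_def by blast
  then have "line_of f e \<in> lines_with_norm c" unfolding lines_with_norm_def by blast
  then have "line_of f e \<in> lines_with_norm (- c)" using eq by simp
  then obtain e' where e': "is_sqrt_mod f \<delta> e'" "norm_A f e' = - c" "line_of f e = line_of f e'"
    unfolding lines_with_norm_def by blast
  then have "c = - c" using norm_A_eq_if_line_of_eq[OF e(1) e'(1,3)] e(2) by simp
  then have "2 * c = 0" by simp
  then show False using two_nonzero norm_A_sqrt_nonzero[OF e(1)] e(2) by simp
qed

lemma same_parity_lines_with_norm:
  assumes "L \<in> lines_with_norm c" "L' \<in> lines_with_norm c"
  shows "same_parity f \<delta> L L'"
proof -
  obtain e e' where "is_sqrt_mod f \<delta> e" "norm_A f e = c" "L = line_of f e"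
    "is_sqrt_mod f \<delta> e'" "norm_A f e' = c" "L' = line_of f e'"
    using assms unfolding lines_with_norm_def by blast
  then show ?thesis unfolding same_parity_iff by metis
qed

lemma max_same_parity_eq_lines_with_norm:
  assumes M: "max_same_parity f \<delta> M"
  obtains c where "M = lines_with_norm c" "M \<noteq> {}" "c * c = norm_A f \<delta>"
proof -
  have M_lines: "M \<subseteq> lines f \<delta>" and M_parity: "\<forall>L\<in>M. \<forall>L'\<in>M. same_parity f \<delta> L L'"
    and M_max: "\<And>S. S \<subseteq> lines f \<delta> \<Longrightarrow> \<forall>L\<in>S. \<forall>L'\<in>S. same_parity f \<delta> L L' \<Longrightarrow> M \<subseteq> S \<Longrightarrow> S = M"
    using M unfolding max_same_parity_def Let_def by blast+
  have eq_M: "lines_with_norm c = M" if "M \<subseteq> lines_with_norm c" for c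
  proof (rule M_max[OF _ _ that])
    show "lines_with_norm c \<subseteq> lines f \<delta>" unfolding lines_with_norm_def lines_def by blast
    show "\<forall>L\<in>lines_with_norm c. \<forall>L'\<in>lines_with_norm c. same_parity f \<delta> L L'"
      using same_parity_lines_with_norm by blast
  qed
  obtain e where e: "is_sqrt_mod f \<delta> e" using exists_sqrt_mod by blast
  have "M \<noteq> {}"
  proof
    assume "M = {}"
    then have "lines_with_norm (norm_A f e) = {}" using eq_M by blast
    moreover have "line_of f e \<in> lines_with_norm (norm_A f e)" unfolding lines_with_norm_def using e by blast
    ultimately show False by blast
  qed
  then obtain e0 where e0: "is_sqrt_mod f \<delta> e0" "line_of f e0 \<in> M"
    using M_lines unfolding lines_def by blast
  have "M \<subseteq> lines_with_norm (norm_A f e0)"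
  proof
    fix L assume "L \<in> M"
    then have "same_parity f \<delta> (line_of f e0) L" using M_parity e0(2) by blast
    then obtain e1 e' where e1: "is_sqrt_mod f \<delta> e1" "line_of f e0 = line_of f e1"
      and e': "is_sqrt_mod f \<delta> e'" "L = line_of f e'" "norm_A f e' = norm_A f e1"
      unfolding same_parity_iff by blast
    have "norm_A f e' = norm_A f e0" using norm_A_eq_if_line_of_eq[OF e0(1) e1] e'(3) by simp
    then show "L \<in> lines_with_norm (norm_A f e0)" unfolding lines_with_norm_def using e' by blast
  qed
  then have "M = lines_with_norm (norm_A f e0)" by (rule eq_M[symmetric])
  then show ?thesis using that \<open>M \<noteq> {}\<close> norm_A_sqrt_square[OF e0(1)] by blast
qed

lemma norm_A_\<delta>_nonzero: "norm_A f \<delta> \<noteq> 0"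
  by (simp add: norm_A_eq_prod_\<Omega> finite_\<Omega> poly_\<delta>_nonzero)

lemma norm_A_\<delta>_in_k: "norm_A f \<delta> \<in> k"
  using norm_A_in_sub_field[OF alg_closed sub_field_k rsquarefree_f] f_over_k \<delta>_over_k
  by (simp add: mem_polys_over)

lemma act_lines_max_same_parity_iff:
  assumes M: "max_same_parity f \<delta> M" and r: "r * r = norm_A f \<delta>"
    and \<sigma>: "field_aut \<sigma>" "\<forall>x\<in>k. \<sigma> x = x"
  shows "act_lines \<sigma> M = M \<longleftrightarrow> \<sigma> r = r"
proof -
  obtain c where c: "M = lines_with_norm c" "M \<noteq> {}" "c * c = r * r"
    using max_same_parity_eq_lines_with_norm[OF M] r by metis
  then have "c = r \<or> c = - r" by (simp add: square_eq_iff)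
  then have \<sigma>_c: "\<sigma> c = c \<longleftrightarrow> \<sigma> r = r" using field_aut_uminus[OF \<sigma>(1)] by auto
  have "\<sigma> c * \<sigma> c = \<sigma> (c * c)" using field_aut_mult[OF \<sigma>(1)] by simp
  also have "\<dots> = c * c" using c(3) r norm_A_\<delta>_in_k \<sigma>(2) by simp
  finally have "\<sigma> c = c \<or> \<sigma> c = - c" by (simp add: square_eq_iff)
  then show ?thesis
  proof
    assume "\<sigma> c = c"
    then show ?thesis using \<sigma>_c by (simp add: c(1) act_lines_lines_with_norm[OF \<sigma>])
  next
    assume "\<sigma> c = - c"
    then have "act_lines \<sigma> M = lines_with_norm (- c)" by (simp add: c(1) act_lines_lines_with_norm[OF \<sigma>])
    moreover have "lines_with_norm (- c) \<noteq> M" using lines_with_norm_uminus c(1,2) by blast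
    moreover from this have "\<sigma> c \<noteq> c" using \<open>\<sigma> c = - c\<close> c(1) by metis
    ultimately show ?thesis using \<sigma>_c by simp
  qed
qed
end

theorem lemma2p39:
  fixes k :: "'a::field set" and f \<delta> :: "'a poly" and M :: "'a poly set set" and r :: 'a
  assumes "is_alg_closure_of k"
    and "(2::'a) \<noteq> 0"
    and "\<forall>i. coeff f i \<in> k" and "degree f = 6" and "rsquarefree f"
    and "\<forall>i. coeff \<delta> i \<in> k"
    and "\<exists>u. (\<forall>i. coeff u i \<in> k) \<and> (\<delta> * u) mod f = 1"
    and "max_same_parity f \<delta> M"
    and "r * r = norm_A f \<delta>"
  shows "is_field_of_def k M (adjoin k r)"
proof -
  have ac: "alg_closed TYPE('a)" and k: "sub_field k" and alg: "\<forall>x. algebraic_over k x"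
    using assms(1) unfolding is_alg_closure_of_def by auto
  interpret sextic_twist k f \<delta> using assms(2-7) ac k by unfold_locales
  have "r \<noteq> 0" using assms(9) norm_A_\<delta>_nonzero by auto
  then have "r \<noteq> - r" using two_nonzero by (metis eq_neg_iff_add_eq_0 mult_2 mult_eq_0_iff)
  moreover have "r * r \<in> k" using norm_A_\<delta>_in_k assms(9) by simp
  ultimately show ?thesis
    using is_field_of_def_adjoin_sqrt[OF ac k alg] act_lines_max_same_parity_iff[OF assms(8,9)] by blast
qed

end
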